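(* Let $a,b,d,f,c\in\mathbb{C}$ with $|af|\neq|bd|$, and let $M=\max\{M_1,M_2\}$ where, with $\Delta=|af|-|bd|$, $K_1=\left(\frac{|b|+|f|}{|\Delta|}\right)^2$, $K_2=\left(\frac{|a|+|d|}{|\Delta|}\right)^2$, $M_1=K_1+\sqrt{K_1(K_1+|c|)}$, $M_2=K_2+\sqrt{K_2(K_2+|c|)}$. Then $M$ is an escape radius for the system: for any orbit $(z_1(n),z_2(n))$ of the system, if $\max\{|z_1(n_0)|,|z_2(n_0)|\}>M$ for some $n_0\ge0$, then $\max\{|z_1(n)|,|z_2(n)|\}\to\infty$ as $n\to\infty$ (indeed $\max\{|z_1(n_0+k)|,|z_2(n_0+k)|\}>2^kM$ for all $k\ge0$).
   Context: The 2D coupled quadratic system with connectivity matrix $A=\begin{pmatrix}a&b\\ d&f\end{pmatrix}$ and parameter $c\in\mathbb{C}$ is the iteration $z_1(n+1)=(az_1(n)+bz_2(n))^2+c$, $z_2(n+1)=(dz_1(n)+fz_2(n))^2+c$, $n\ge 0$, from an initial condition $(z_1(0),z_2(0))\in\mathbb{C}^2$. *)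

theory Defs
  imports "HOL-Analysis.Analysis"
begin

definition cq_step :: "complex \<Rightarrow> complex \<Rightarrow> complex \<Rightarrow> complex \<Rightarrow> complex
    \<Rightarrow> complex \<times> complex \<Rightarrow> complex \<times> complex" where
  "cq_step a b d f c z =
     ((a * fst z + b * snd z)^2 + c, (d * fst z + f * snd z)^2 + c)"

definition cq_orbit :: "complex \<Rightarrow> complex \<Rightarrow> complex \<Rightarrow> complex \<Rightarrow> complex
    \<Rightarrow> complex \<times> complex \<Rightarrow> nat \<Rightarrow> complex \<times> complex" where
  "cq_orbit a b d f c z0 n = (cq_step a b d f c ^^ n) z0"

definition cq_radius :: "complex \<Rightarrow> complex \<Rightarrow> complex \<Rightarrow> complex \<Rightarrow> complex \<Rightarrow> real" where
  "cq_radius a b d f c =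
     (let \<Delta> = cmod a * cmod f - cmod b * cmod d;
          K1 = ((cmod b + cmod f) / \<bar>\<Delta>\<bar>)^2;
          K2 = ((cmod a + cmod d) / \<bar>\<Delta>\<bar>)^2;
          M1 = K1 + sqrt (K1 * (K1 + cmod c));
          M2 = K2 + sqrt (K2 * (K2 + cmod c))
      in max M1 M2)"

end

theory Submission
  imports Defs "HOL-Real_Asymp.Real_Asymp"
begin

text \<open>Write \<open>w = A z\<close> for the linear part of the step. Inverting \<open>A\<close> bounds each \<open>|z\<^sub>i|\<close> by
  \<open>\<surd>K\<^sub>i \<cdot> \<parallel>w\<parallel>\<^sub>\<infinity>\<close>, since \<open>|\<Delta>| \<le> |det A|\<close>. If \<open>\<parallel>z\<parallel>\<^sub>\<infinity> = |z\<^sub>i| > M\<^sub>i\<close>, then \<open>\<parallel>z\<parallel>\<^sub>\<infinity>\<close> lies beyond the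
  positive root \<open>M\<^sub>i\<close> of \<open>m\<^sup>2 - 2K\<^sub>i m - K\<^sub>i|c|\<close>, so \<open>\<parallel>w\<parallel>\<^sub>\<infinity>\<^sup>2 \<ge> \<parallel>z\<parallel>\<^sub>\<infinity>\<^sup>2 / K\<^sub>i > 2\<parallel>z\<parallel>\<^sub>\<infinity> + |c|\<close>, and
  squaring and adding \<open>c\<close> yields a point of norm \<open>> 2\<parallel>z\<parallel>\<^sub>\<infinity>\<close>.\<close>

abbreviation max_cmod :: "complex \<times> complex \<Rightarrow> real" where
  "max_cmod z \<equiv> max (cmod (fst z)) (cmod (snd z))"

lemma norm_mult_det_le_norm_linear_image:
  fixes a b d f x y :: "'a::real_normed_field"
  shows "norm x * \<bar>norm a * norm f - norm b * norm d\<bar>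
    \<le> (norm b + norm f) * max (norm (a * x + b * y)) (norm (d * x + f * y))"
proof -
  let ?W = "max (norm (a * x + b * y)) (norm (d * x + f * y))"
  have "\<bar>norm a * norm f - norm b * norm d\<bar> \<le> norm (a * f - b * d)"
    using norm_triangle_ineq3[of "a * f" "b * d"] by (simp add: norm_mult)
  then have "norm x * \<bar>norm a * norm f - norm b * norm d\<bar> \<le> norm ((a * f - b * d) * x)"
    by (simp add: norm_mult mult_left_mono mult.commute)
  also have "(a * f - b * d) * x = f * (a * x + b * y) - b * (d * x + f * y)"
    by (simp add: algebra_simps)
  also have "norm \<dots> \<le> norm f * norm (a * x + b * y) + norm b * norm (d * x + f * y)"
    by (metis norm_mult norm_triangle_ineq4)
  also have "\<dots> \<le> norm f * ?W + norm b * ?W"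
    by (intro add_mono mult_left_mono) auto
  finally show ?thesis
    by (simp add: algebra_simps)
qed

lemma norm_sq_le_linear_image:
  fixes a b d f x y :: "'a::real_normed_field"
  assumes "norm a * norm f \<noteq> norm b * norm d"
  shows "(norm x)\<^sup>2 \<le> ((norm b + norm f) / \<bar>norm a * norm f - norm b * norm d\<bar>)\<^sup>2
    * (max (norm (a * x + b * y)) (norm (d * x + f * y)))\<^sup>2"
proof -
  let ?\<Delta> = "\<bar>norm a * norm f - norm b * norm d\<bar>"
  let ?W = "max (norm (a * x + b * y)) (norm (d * x + f * y))"
  have "norm x \<le> (norm b + norm f) / ?\<Delta> * ?W"
    using norm_mult_det_le_norm_linear_image[of x a f b d y] assms
    by (simp add: field_simps)
  then have "(norm x)\<^sup>2 \<le> ((norm b + norm f) / ?\<Delta> * ?W)\<^sup>2"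
    by (intro power_mono) auto
  then show ?thesis
    by (simp only: power_mult_distrib)
qed

lemma sq_gt_beyond_quadratic_root:
  fixes K m c :: real
  assumes "K \<ge> 0" "c \<ge> 0" "m > K + sqrt (K * (K + c))"
  shows "m\<^sup>2 > 2 * K * m + K * c"
proof -
  have "(sqrt (K * (K + c)))\<^sup>2 < (m - K)\<^sup>2"
    using assms by (intro power_strict_mono) auto
  with assms show ?thesis
    by (simp add: power2_eq_square algebra_simps)
qed

lemma sq_gt_double_plus_if_beyond_root:
  fixes K m c W :: real
  assumes "K \<ge> 0" "c \<ge> 0" "m > K + sqrt (K * (K + c))" "m\<^sup>2 \<le> K * W\<^sup>2"
  shows "W\<^sup>2 > 2 * m + c"
proof (rule mult_left_less_imp_less)
  show "K * (2 * m + c) < K * W\<^sup>2"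
    using sq_gt_beyond_quadratic_root[OF assms(1-3)] assms(4)
    by (simp add: algebra_simps)
qed (use assms in auto)

lemma max_cmod_cq_step_ge:
  fixes a b d f c x y :: complex
  shows "max_cmod (cq_step a b d f c (x, y))
    \<ge> (max (cmod (a * x + b * y)) (cmod (d * x + f * y)))\<^sup>2 - cmod c"
proof -
  have sq_add: "cmod (w\<^sup>2 + c) \<ge> (cmod w)\<^sup>2 - cmod c" for w
    using norm_diff_ineq[of "w\<^sup>2" c] by (simp add: norm_power)
  show ?thesis
    using sq_add[of "a * x + b * y"] sq_add[of "d * x + f * y"]
    by (auto simp: cq_step_def max_def power_mono)
qed

lemma cq_step_doubles_beyond_radius:
  fixes a b d f c :: complex and z :: "complex \<times> complex"
  assumes "cmod (a * f) \<noteq> cmod (b * d)"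
    and "max_cmod z > cq_radius a b d f c"
  shows "max_cmod (cq_step a b d f c z) > 2 * max_cmod z"
proof -
  obtain x y where z: "z = (x, y)"
    by (cases z)
  define \<Delta> where "\<Delta> = \<bar>cmod a * cmod f - cmod b * cmod d\<bar>"
  define K1 where "K1 = ((cmod b + cmod f) / \<Delta>)\<^sup>2"
  define K2 where "K2 = ((cmod a + cmod d) / \<Delta>)\<^sup>2"
  define W where "W = max (cmod (a * x + b * y)) (cmod (d * x + f * y))"
  have nondeg: "cmod a * cmod f \<noteq> cmod b * cmod d"
    using assms(1) by (simp add: norm_mult)
  have x_bound: "(cmod x)\<^sup>2 \<le> K1 * W\<^sup>2"
    using norm_sq_le_linear_image[OF nondeg, of x y] by (simp add: K1_def W_def \<Delta>_def)
  have y_bound: "(cmod y)\<^sup>2 \<le> K2 * W\<^sup>2"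
    \<comment> \<open>the same bound with the two columns of the matrix swapped\<close>
    using norm_sq_le_linear_image[of b d a f y x] nondeg
    by (simp add: K2_def W_def \<Delta>_def add.commute abs_minus_commute)
  have radius: "cq_radius a b d f c
      = max (K1 + sqrt (K1 * (K1 + cmod c))) (K2 + sqrt (K2 * (K2 + cmod c)))"
    by (simp add: cq_radius_def Let_def K1_def K2_def \<Delta>_def)
  have "2 * max_cmod z < W\<^sup>2 - cmod c"
  proof (cases "cmod y \<le> cmod x")
    case True
    then show ?thesis
      using assms(2) x_bound sq_gt_double_plus_if_beyond_root[of K1 "cmod c" "cmod x" W]
      by (simp add: z radius K1_def)
  next
    case False
    then show ?thesis
      using assms(2) y_bound sq_gt_double_plus_if_beyond_root[of K2 "cmod c" "cmod y" W]
      by (simp add: z radius K2_def)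
  qed
  also have "\<dots> \<le> max_cmod (cq_step a b d f c z)"
    unfolding W_def z by (rule max_cmod_cq_step_ge)
  finally show ?thesis .
qed

lemma filterlim_at_top_if_doubling:
  fixes g :: "nat \<Rightarrow> real"
  assumes "g n0 > 0" and doubling: "\<And>k. g (n0 + k) \<ge> 2 ^ k * g n0"
  shows "filterlim g at_top sequentially"
proof (rule filterlim_at_top_mono)
  show "filterlim (\<lambda>n. 2 ^ n * (g n0 / 2 ^ n0)) at_top sequentially"
    using assms(1) by real_asymp
  have "2 ^ n * (g n0 / 2 ^ n0) \<le> g n" if "n0 \<le> n" for n
  proof -
    obtain k where n: "n = n0 + k"
      using le_Suc_ex[OF \<open>n0 \<le> n\<close>] by blast
    then have "2 ^ n * (g n0 / 2 ^ n0) = 2 ^ k * g n0"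
      by (simp add: power_add)
    with doubling[of k] n show ?thesis
      by simp
  qed
  then show "\<forall>\<^sub>F n in sequentially. 2 ^ n * (g n0 / 2 ^ n0) \<le> g n"
    unfolding eventually_sequentially by blast
qed

theorem mainTheorem2:
  fixes a b d f c :: complex and z0 :: "complex \<times> complex" and n0 :: nat
  assumes "cmod (a * f) \<noteq> cmod (b * d)"
    and "max (cmod (fst (cq_orbit a b d f c z0 n0))) (cmod (snd (cq_orbit a b d f c z0 n0)))
           > cq_radius a b d f c"
  shows "filterlim (\<lambda>n. max (cmod (fst (cq_orbit a b d f c z0 n))) (cmod (snd (cq_orbit a b d f c z0 n))))
           at_top sequentially \<and>
         (\<forall>k. max (cmod (fst (cq_orbit a b d f c z0 (n0 + k)))) (cmod (snd (cq_orbit a b d f c z0 (n0 + k))))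
           > 2 ^ k * cq_radius a b d f c)"
proof -
  define g where "g = (\<lambda>n. max_cmod (cq_orbit a b d f c z0 n))"
  define M where "M = cq_radius a b d f c"
  have "M \<ge> 0"
    by (simp add: M_def cq_radius_def Let_def max_def)
  have growth: "g (n0 + k) \<ge> 2 ^ k * g n0 \<and> g (n0 + k) > M" for k
  proof (induction k)
    case (Suc k)
    have "g (n0 + Suc k) > 2 * g (n0 + k)"
      using cq_step_doubles_beyond_radius[OF assms(1)] Suc
      by (simp add: g_def M_def cq_orbit_def)
    with Suc \<open>M \<ge> 0\<close> show ?case
      by auto
  qed (use assms(2) in \<open>simp add: g_def M_def\<close>)
  have "filterlim g at_top sequentially"
  proof (rule filterlim_at_top_if_doubling)
    show "g n0 > 0"
      using growth[of 0] \<open>M \<ge> 0\<close> by simp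
  qed (use growth in auto)
  moreover have "g (n0 + k) > 2 ^ k * M" for k
  proof -
    have "2 ^ k * M < 2 ^ k * g n0"
      using growth[of 0] by simp
    with growth[of k] show ?thesis
      by linarith
  qed
  ultimately show ?thesis
    by (simp add: g_def M_def)
qed

end
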